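(* Let $\varphi\in\mathcal{A}$ be w.h.i.s. and let $\vec h\in\mathcal{A}^3$. If $(\vec\nabla\times\vec h)\cdot\vec\nabla\varphi=0$, then there exist $f,g\in\mathcal{A}$ such that $\vec h=\vec\nabla f+g\vec\nabla\varphi$.
   Context: $\mathbf{F}$ is a field of characteristic zero and $\mathcal{A}=\mathbf{F}[x,y,z]$. Elements of $\mathcal{A}^3$ are treated as vector fields: $\vec f\cdot\vec g$, $\vec f\times\vec g$ are the usual inner and cross products, $\vec\nabla f=(\partial f/\partial x,\partial f/\partial y,\partial f/\partial z)$, $\vec\nabla\times$ is the curl and $\mathrm{Div}$ the divergence. Fix positive integers $\varpi_1,\varpi_2,\varpi_3$ without common divisor $>1$ (the weights of $x,y,z$). A nonzero polynomial is weight homogeneous of degree $d$ if it is an $\mathbf{F}$-linear combination of monomials $x^ay^bz^c$ with $a\varpi_1+b\varpi_2+c\varpi_3=d$; we write $\varpi(f)=d$. A polynomial $\varphi\in\mathcal{A}$ is called w.h.i.s. (weight homogeneous with an isolated singularity) if it is weight homogeneous and $\mathcal{A}_{sing}:=\mathcal{A}/\langle\partial\varphi/\partial x,\partial\varphi/\partial y,\partial\varphi/\partial z\rangle$ is a nonzero finite-dimensional $\mathbf{F}$-vector space. *)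

theory Defs
  imports "HOL-Computational_Algebra.Polynomial"
begin

text \<open>F[x,y,z] is modelled as ((F[x])[y])[z], i.e. the type 'a poly poly poly:
  the outermost variable is z, the middle one y, the innermost one x.\<close>

type_synonym 'a mpoly3 = "'a poly poly poly"

definition dX :: "'a::idom mpoly3 \<Rightarrow> 'a mpoly3" where
  "dX p = map_poly (map_poly pderiv) p"
definition dY :: "'a::idom mpoly3 \<Rightarrow> 'a mpoly3" where
  "dY p = map_poly pderiv p"
definition dZ :: "'a::idom mpoly3 \<Rightarrow> 'a mpoly3" where
  "dZ p = pderiv p"

definition coeff3 :: "'a::zero mpoly3 \<Rightarrow> nat \<Rightarrow> nat \<Rightarrow> nat \<Rightarrow> 'a" where
  "coeff3 p a b c = coeff (coeff (coeff p c) b) a"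

definition const3 :: "'a::zero \<Rightarrow> 'a mpoly3" where
  "const3 c = [:[:[:c:]:]:]"

definition weight_homogeneous ::
  "nat \<Rightarrow> nat \<Rightarrow> nat \<Rightarrow> nat \<Rightarrow> 'a::zero mpoly3 \<Rightarrow> bool" where
  "weight_homogeneous w1 w2 w3 d p \<longleftrightarrow> p \<noteq> 0 \<and>
     (\<forall>a b c. coeff3 p a b c \<noteq> 0 \<longrightarrow> a * w1 + b * w2 + c * w3 = d)"

definition jac_ideal :: "'a::idom mpoly3 \<Rightarrow> 'a mpoly3 set" where
  "jac_ideal phi = {a * dX phi + b * dY phi + c * dZ phi | a b c. True}"

text \<open>A/J is a nonzero finite-dimensional F-vector space:
  1 \<notin> J, and finitely many classes span A/J over F.\<close>
definition isolated_sing :: "'a::field mpoly3 \<Rightarrow> bool" where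
  "isolated_sing phi \<longleftrightarrow> 1 \<notin> jac_ideal phi \<and>
     (\<exists>S. finite S \<and> (\<forall>p. \<exists>k. p - (\<Sum>s\<in>S. const3 (k s) * s) \<in> jac_ideal phi))"

definition whis :: "nat \<Rightarrow> nat \<Rightarrow> nat \<Rightarrow> 'a::field mpoly3 \<Rightarrow> bool" where
  "whis w1 w2 w3 phi \<longleftrightarrow> (\<exists>d. weight_homogeneous w1 w2 w3 d phi) \<and> isolated_sing phi"

type_synonym 'a vfield = "'a mpoly3 \<times> 'a mpoly3 \<times> 'a mpoly3"

definition grad :: "'a::idom mpoly3 \<Rightarrow> 'a vfield" where
  "grad f = (dX f, dY f, dZ f)"

definition curl :: "'a::idom vfield \<Rightarrow> 'a vfield" where
  "curl h = (case h of (h1, h2, h3) \<Rightarrow>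
     (dY h3 - dZ h2, dZ h1 - dX h3, dX h2 - dY h1))"

definition vdot :: "'a::idom vfield \<Rightarrow> 'a vfield \<Rightarrow> 'a mpoly3" where
  "vdot u v = (case u of (u1, u2, u3) \<Rightarrow> case v of (v1, v2, v3) \<Rightarrow>
     u1 * v1 + u2 * v2 + u3 * v3)"

definition vadd :: "'a::idom vfield \<Rightarrow> 'a vfield \<Rightarrow> 'a vfield" where
  "vadd u v = (case u of (u1, u2, u3) \<Rightarrow> case v of (v1, v2, v3) \<Rightarrow>
     (u1 + v1, u2 + v2, u3 + v3))"

definition vscale :: "'a::idom mpoly3 \<Rightarrow> 'a vfield \<Rightarrow> 'a vfield" where
  "vscale g v = (case v of (v1, v2, v3) \<Rightarrow> (g * v1, g * v2, g * v3))"

end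

theory Submission
  imports Defs "HOL-Library.Product_Plus"
begin

text \<open>Let \<open>J\<close> be the ideal generated by \<open>\<nabla>\<phi>\<close>. As \<open>\<phi>\<close> is weighted homogeneous and
  \<open>A/J\<close> is finite-dimensional, \<open>J\<close> contains pure powers \<open>x\<^sup>a, y\<^sup>b, z\<^sup>c\<close>: the powers
  \<open>1, x, x\<^sup>2, \<dots>\<close> are linearly dependent modulo \<open>J\<close>, and projecting a dependence onto a
  single weight isolates one of them. The pure powers make the Koszul complex of \<open>\<nabla>\<phi>\<close>
  exact, so every \<open>A\<close> with \<open>A \<cdot> \<nabla>\<phi> = 0\<close> is a cross product \<open>G \<times> \<nabla>\<phi>\<close>.

  For a 1-form \<open>h\<close> of weighted degree \<open>D\<close> write \<open>curl h = H \<times> \<nabla>\<phi>\<close> with \<open>H\<close> of degree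
  \<open>D - deg \<phi>\<close>. Since \<open>div (H \<times> \<nabla>\<phi>) = curl H \<cdot> \<nabla>\<phi>\<close> and \<open>div curl = 0\<close>, \<open>H\<close>
  satisfies the hypothesis again, and by induction on the degree \<open>H = \<nabla>F' + g' \<nabla>\<phi>\<close>.
  Then \<open>curl (h - F' \<nabla>\<phi>) = (H - \<nabla>F') \<times> \<nabla>\<phi> = 0\<close>, and a closed weighted homogeneous
  1-form \<open>k\<close> of degree \<open>D \<noteq> 0\<close> is exact: it is the gradient of its contraction with the
  weighted Euler field divided by \<open>D\<close> (this uses characteristic zero). A general \<open>h\<close> is the
  sum of its homogeneous components.\<close>

section \<open>Coefficients and partial derivatives\<close>

lemma coeff3_eqI: "(\<And>a b c. coeff3 p a b c = coeff3 q a b c) \<Longrightarrow> p = q"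
  unfolding coeff3_def by (metis poly_eq_iff)

definition x_pow :: "nat \<Rightarrow> 'a::comm_ring_1 mpoly3" where "x_pow n = [:[:monom 1 n:]:]"
definition y_pow :: "nat \<Rightarrow> 'a::comm_ring_1 mpoly3" where "y_pow n = [:monom 1 n:]"
definition z_pow :: "nat \<Rightarrow> 'a::comm_ring_1 mpoly3" where "z_pow n = monom 1 n"

lemma coeff3_0 [simp]: "coeff3 0 a b c = 0"
  by (simp add: coeff3_def)
lemma coeff3_add [simp]: "coeff3 (p + q) a b c = coeff3 p a b c + coeff3 q a b c"
  by (simp add: coeff3_def)
lemma coeff3_diff [simp]: "coeff3 (p - q) a b c = coeff3 p a b c - coeff3 q a b c"
  by (simp add: coeff3_def)
lemma coeff3_sum: "coeff3 (sum f S) a b c = (\<Sum>i\<in>S. coeff3 (f i) a b c)"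
  by (simp add: coeff3_def coeff_sum)
lemma coeff3_const3: "coeff3 (const3 k) a b c = (if a = 0 \<and> b = 0 \<and> c = 0 then k else 0)"
  by (cases a; cases b; cases c; simp add: coeff3_def const3_def)
lemma coeff3_const3_mult: "coeff3 (const3 k * p) a b c = k * coeff3 p a b c"
  by (simp add: coeff3_def const3_def)
lemma coeff3_1: "coeff3 (1 :: 'a::comm_ring_1 mpoly3) a b c
    = (if a = 0 \<and> b = 0 \<and> c = 0 then 1 else 0)"
  by (cases a; cases b; cases c; simp add: coeff3_def)

lemma coeff3_x_pow: "coeff3 (x_pow n :: 'a::comm_ring_1 mpoly3) a b c
    = (if a = n \<and> b = 0 \<and> c = 0 then 1 else 0)"
  by (cases b; cases c; simp add: coeff3_def x_pow_def coeff_monom)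
lemma coeff3_y_pow: "coeff3 (y_pow n :: 'a::comm_ring_1 mpoly3) a b c
    = (if a = 0 \<and> b = n \<and> c = 0 then 1 else 0)"
  by (cases a; cases c; simp add: coeff3_def y_pow_def coeff_monom)
lemma coeff3_z_pow: "coeff3 (z_pow n :: 'a::comm_ring_1 mpoly3) a b c
    = (if a = 0 \<and> b = 0 \<and> c = n then 1 else 0)"
  by (cases a; cases b; simp add: coeff3_def z_pow_def coeff_monom)

lemma coeff3_x_pow_mult: "coeff3 (x_pow n * p) a b c = (if a < n then 0 else coeff3 p (a - n) b c)"
  by (simp add: coeff3_def x_pow_def coeff_monom_mult)
lemma coeff3_y_pow_mult: "coeff3 (y_pow n * p) a b c = (if b < n then 0 else coeff3 p a (b - n) c)"
  by (simp add: coeff3_def y_pow_def coeff_monom_mult)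
lemma coeff3_z_pow_mult: "coeff3 (z_pow n * p) a b c = (if c < n then 0 else coeff3 p a b (c - n))"
  by (simp add: coeff3_def z_pow_def coeff_monom_mult)

lemma const3_add: "const3 (a + b) = const3 a + (const3 b :: 'a::comm_ring_1 mpoly3)"
  by (simp add: const3_def)
lemma const3_mult: "const3 (a * b) = const3 a * (const3 b :: 'a::comm_ring_1 mpoly3)"
  by (simp add: const3_def)
lemma const3_0 [simp]: "const3 0 = (0 :: 'a::comm_ring_1 mpoly3)"
  by (simp add: const3_def)
lemma const3_1 [simp]: "const3 1 = (1 :: 'a::comm_ring_1 mpoly3)"
  by (simp add: const3_def one_pCons)
lemma const3_sum: "const3 (sum f S) = (\<Sum>i\<in>S. const3 (f i) :: 'a::comm_ring_1 mpoly3)"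
  by (induction S rule: infinite_finite_induct) (auto simp: const3_add)
lemma const3_inverse_mult:
  "k \<noteq> 0 \<Longrightarrow> const3 (inverse k) * (const3 k * p) = (p :: 'a::field mpoly3)"
  by (simp flip: mult.assoc const3_mult)

lemma coeff3_dX: "coeff3 (dX p) a b c = of_nat (Suc a) * coeff3 p (Suc a) b c"
  by (simp add: coeff3_def dX_def coeff_map_poly coeff_pderiv)
lemma coeff3_dY: "coeff3 (dY p) a b c = of_nat (Suc b) * coeff3 p a (Suc b) c"
  by (simp add: coeff3_def dY_def coeff_map_poly coeff_pderiv of_nat_poly)
lemma coeff3_dZ: "coeff3 (dZ p) a b c = of_nat (Suc c) * coeff3 p a b (Suc c)"
  by (simp add: coeff3_def dZ_def coeff_pderiv of_nat_poly)

definition derivation :: "('a::comm_ring_1 \<Rightarrow> 'a) \<Rightarrow> bool" where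
  "derivation D \<longleftrightarrow> (\<forall>a b. D (a + b) = D a + D b) \<and> (\<forall>a b. D (a * b) = D a * b + a * D b)"

lemma derivation_pderiv: "derivation (pderiv :: 'a::idom poly \<Rightarrow> _)"
  unfolding derivation_def by (simp add: pderiv_add pderiv_mult algebra_simps)

lemma derivation_map_poly:
  assumes "derivation D"
  shows "derivation (map_poly D)"
proof -
  have add: "D (a + b) = D a + D b" and mult: "D (a * b) = D a * b + a * D b" for a b
    using assms unfolding derivation_def by auto
  have D0: "D 0 = 0" using add[of 0 0] by simp
  have D_sum: "D (sum f A) = (\<Sum>i\<in>A. D (f i))" for f :: "nat \<Rightarrow> 'a" and A
    by (induction A rule: infinite_finite_induct) (simp_all add: D0 add)
  have "coeff (map_poly D (p * q)) n = coeff (map_poly D p * q + p * map_poly D q) n" for p q n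
  proof -
    have "coeff (map_poly D (p * q)) n = D (\<Sum>i\<le>n. coeff p i * coeff q (n - i))"
      by (simp add: coeff_map_poly D0 coeff_mult)
    also have "\<dots> = (\<Sum>i\<le>n. D (coeff p i) * coeff q (n - i) + coeff p i * D (coeff q (n - i)))"
      by (simp add: D_sum mult)
    also have "\<dots> = coeff (map_poly D p * q + p * map_poly D q) n"
      by (simp add: coeff_mult coeff_map_poly D0 sum.distrib)
    finally show ?thesis .
  qed
  then show ?thesis
    unfolding derivation_def by (auto intro: poly_eqI simp: coeff_map_poly D0 add)
qed

context
  fixes p q :: "'a::idom mpoly3" and f :: "'b \<Rightarrow> 'a mpoly3"
begin

lemma dX_add [simp]: "dX (p + q) = dX p + dX q"
  by (rule coeff3_eqI) (simp add: coeff3_dX algebra_simps)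
lemma dY_add [simp]: "dY (p + q) = dY p + dY q"
  by (rule coeff3_eqI) (simp add: coeff3_dY algebra_simps)
lemma dZ_add [simp]: "dZ (p + q) = dZ p + dZ q"
  by (rule coeff3_eqI) (simp add: coeff3_dZ algebra_simps)
lemma dX_diff [simp]: "dX (p - q) = dX p - dX q"
  by (rule coeff3_eqI) (simp add: coeff3_dX algebra_simps)
lemma dY_diff [simp]: "dY (p - q) = dY p - dY q"
  by (rule coeff3_eqI) (simp add: coeff3_dY algebra_simps)
lemma dZ_diff [simp]: "dZ (p - q) = dZ p - dZ q"
  by (rule coeff3_eqI) (simp add: coeff3_dZ algebra_simps)

lemma dX_mult [simp]: "dX (p * q) = dX p * q + p * dX q"
  using derivation_map_poly[OF derivation_map_poly[OF derivation_pderiv]]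
  unfolding dX_def derivation_def by blast
lemma dY_mult [simp]: "dY (p * q) = dY p * q + p * dY q"
  using derivation_map_poly[OF derivation_pderiv] unfolding dY_def derivation_def by blast
lemma dZ_mult [simp]: "dZ (p * q) = dZ p * q + p * dZ q"
  unfolding dZ_def by (simp add: pderiv_mult algebra_simps)

lemma dX_sum: "dX (sum f S) = (\<Sum>i\<in>S. dX (f i))"
  by (rule coeff3_eqI) (simp add: coeff3_dX coeff3_sum sum_distrib_left)
lemma dY_sum: "dY (sum f S) = (\<Sum>i\<in>S. dY (f i))"
  by (rule coeff3_eqI) (simp add: coeff3_dY coeff3_sum sum_distrib_left)
lemma dZ_sum: "dZ (sum f S) = (\<Sum>i\<in>S. dZ (f i))"
  by (rule coeff3_eqI) (simp add: coeff3_dZ coeff3_sum sum_distrib_left)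

lemma dX_dY: "dX (dY p) = dY (dX p)"
  by (rule coeff3_eqI) (simp add: coeff3_dX coeff3_dY algebra_simps)
lemma dX_dZ: "dX (dZ p) = dZ (dX p)"
  by (rule coeff3_eqI) (simp add: coeff3_dX coeff3_dZ algebra_simps)
lemma dY_dZ: "dY (dZ p) = dZ (dY p)"
  by (rule coeff3_eqI) (simp add: coeff3_dY coeff3_dZ algebra_simps)

end

lemma dX_0 [simp]: "dX 0 = 0" and dY_0 [simp]: "dY 0 = 0" and dZ_0 [simp]: "dZ 0 = 0"
  by (simp_all add: dX_def dY_def dZ_def)

lemma dX_const3 [simp]: "dX (const3 k :: 'a::idom mpoly3) = 0"
  and dY_const3 [simp]: "dY (const3 k :: 'a mpoly3) = 0"
  and dZ_const3 [simp]: "dZ (const3 k :: 'a mpoly3) = 0"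
  by (rule coeff3_eqI; simp add: coeff3_dX coeff3_dY coeff3_dZ coeff3_const3)+

lemma x_pow_0 [simp]: "x_pow 0 = 1"
  and y_pow_0 [simp]: "y_pow 0 = 1" and z_pow_0 [simp]: "z_pow 0 = 1"
  by (simp_all add: x_pow_def y_pow_def z_pow_def one_pCons monom_0)

lemma dX_x_pow [simp]: "dX (x_pow n :: 'a::idom mpoly3) = const3 (of_nat n) * x_pow (n - 1)"
  and dY_y_pow [simp]: "dY (y_pow n :: 'a mpoly3) = const3 (of_nat n) * y_pow (n - 1)"
  and dZ_z_pow [simp]: "dZ (z_pow n :: 'a mpoly3) = const3 (of_nat n) * z_pow (n - 1)"
  by (rule coeff3_eqI; cases n; auto simp: coeff3_dX coeff3_dY coeff3_dZ coeff3_x_pow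
      coeff3_y_pow coeff3_z_pow coeff3_const3_mult coeff3_1)+

lemma dY_x_pow [simp]: "dY (x_pow n :: 'a::idom mpoly3) = 0"
  and dZ_x_pow [simp]: "dZ (x_pow n :: 'a mpoly3) = 0"
  and dX_y_pow [simp]: "dX (y_pow n :: 'a mpoly3) = 0"
  and dZ_y_pow [simp]: "dZ (y_pow n :: 'a mpoly3) = 0"
  and dX_z_pow [simp]: "dX (z_pow n :: 'a mpoly3) = 0"
  and dY_z_pow [simp]: "dY (z_pow n :: 'a mpoly3) = 0"
  by (rule coeff3_eqI; simp add: coeff3_dX coeff3_dY coeff3_dZ coeff3_x_pow coeff3_y_pow
      coeff3_z_pow)+

section \<open>Vector calculus\<close>

definition vcross :: "'a::idom vfield \<Rightarrow> 'a vfield \<Rightarrow> 'a vfield" where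
  "vcross u v = (case u of (u1, u2, u3) \<Rightarrow> case v of (v1, v2, v3) \<Rightarrow>
     (u2 * v3 - u3 * v2, u3 * v1 - u1 * v3, u1 * v2 - u2 * v1))"

definition vdiv :: "'a::idom vfield \<Rightarrow> 'a mpoly3" where
  "vdiv v = (case v of (v1, v2, v3) \<Rightarrow> dX v1 + dY v2 + dZ v3)"

lemma vfield_zero: "(0 :: 'a::zero vfield) = (0, 0, 0)"
  by (simp add: zero_prod_def)

lemmas vfield_defs = vdot_def vscale_def vcross_def curl_def grad_def vdiv_def vfield_zero

lemma vadd_eq_plus [simp]: "vadd u v = u + v"
  by (cases u rule: prod_cases3; cases v rule: prod_cases3) (simp add: vadd_def)

context
  fixes u v w :: "'a::idom vfield" and f g :: "'a mpoly3"
begin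


lemma vcross_self [simp]: "vcross v v = 0"
  by (cases v rule: prod_cases3) (simp add: vfield_defs algebra_simps)

lemma vcross_vcross: "vcross u (vcross v w) = vscale (vdot u w) v - vscale (vdot u v) w"
  by (cases u rule: prod_cases3; cases v rule: prod_cases3; cases w rule: prod_cases3)
    (simp add: vfield_defs algebra_simps)

lemma vcross_vcross_left: "vcross (vcross u v) w = vscale (vdot u w) v - vscale (vdot v w) u"
  by (cases u rule: prod_cases3; cases v rule: prod_cases3; cases w rule: prod_cases3)
    (simp add: vfield_defs algebra_simps)


lemma vcross_add_left: "vcross (u + v) w = vcross u w + vcross v w"
  by (cases u rule: prod_cases3; cases v rule: prod_cases3; cases w rule: prod_cases3)
    (simp add: vfield_defs algebra_simps)

lemma vcross_vscale_left: "vcross (vscale g u) v = vscale g (vcross u v)"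
  by (cases u rule: prod_cases3; cases v rule: prod_cases3) (simp add: vfield_defs algebra_simps)

lemma vcross_vscale_right: "vcross u (vscale g v) = vscale g (vcross u v)"
  by (cases u rule: prod_cases3; cases v rule: prod_cases3) (simp add: vfield_defs algebra_simps)

lemma vdot_0_left [simp]: "vdot 0 v = 0"
  by (cases v rule: prod_cases3) (simp add: vfield_defs)

lemma vdot_0_right [simp]: "vdot u 0 = 0"
  by (cases u rule: prod_cases3) (simp add: vfield_defs)

lemma vdot_add_left: "vdot (u + v) w = vdot u w + vdot v w"
  by (cases u rule: prod_cases3; cases v rule: prod_cases3; cases w rule: prod_cases3)
    (simp add: vfield_defs algebra_simps)

lemma vdot_vscale_left: "vdot (vscale g u) v = g * vdot u v"
  by (cases u rule: prod_cases3; cases v rule: prod_cases3) (simp add: vfield_defs algebra_simps)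

lemma vdot_vscale_right: "vdot u (vscale g v) = g * vdot u v"
  by (cases u rule: prod_cases3; cases v rule: prod_cases3) (simp add: vfield_defs algebra_simps)


lemma vscale_add_right: "vscale g (u + v) = vscale g u + vscale g v"
  by (cases u rule: prod_cases3; cases v rule: prod_cases3) (simp add: vfield_defs algebra_simps)

lemma vscale_diff_right: "vscale g (u - v) = vscale g u - vscale g v"
  by (cases u rule: prod_cases3; cases v rule: prod_cases3) (simp add: vfield_defs algebra_simps)

lemma vscale_0_left [simp]: "vscale 0 v = 0"
  by (cases v rule: prod_cases3) (simp add: vfield_defs)

lemma vscale_0_right [simp]: "vscale g 0 = 0"
  by (simp add: vfield_defs)

lemma vscale_diff_left: "vscale (f - g) v = vscale f v - vscale g v"
  by (cases v rule: prod_cases3) (simp add: vfield_defs algebra_simps)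

lemma vdot_diff_right: "vdot u (v - w) = vdot u v - vdot u w"
  by (cases u rule: prod_cases3; cases v rule: prod_cases3; cases w rule: prod_cases3)
    (simp add: vfield_defs algebra_simps)

lemma vscale_mult: "vscale (f * g) v = vscale f (vscale g v)"
  by (cases v rule: prod_cases3) (simp add: vfield_defs algebra_simps)

lemma vscale_cancel: "g \<noteq> 0 \<Longrightarrow> vscale g u = vscale g v \<longleftrightarrow> u = v"
  by (cases u rule: prod_cases3; cases v rule: prod_cases3) (simp add: vfield_defs)

lemma curl_diff: "curl (u - v) = curl u - curl v"
  by (cases u rule: prod_cases3; cases v rule: prod_cases3) (simp add: vfield_defs algebra_simps)

lemma curl_grad [simp]: "curl (grad f) = 0"
  by (simp add: vfield_defs dX_dY dX_dZ dY_dZ)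

lemma vdiv_curl [simp]: "vdiv (curl v) = 0"
  by (cases v rule: prod_cases3) (simp add: vfield_defs dX_dY dX_dZ dY_dZ)

lemma vdiv_vcross: "vdiv (vcross u v) = vdot (curl u) v - vdot u (curl v)"
  by (cases u rule: prod_cases3; cases v rule: prod_cases3) (simp add: vfield_defs algebra_simps)

lemma curl_vscale: "curl (vscale g v) = vscale g (curl v) + vcross (grad g) v"
  by (cases v rule: prod_cases3) (simp add: vfield_defs algebra_simps)

end

lemma grad_sum: "grad (sum f S) = (\<Sum>i\<in>S. grad (f i))"
  by (simp add: grad_def dX_sum dY_sum dZ_sum sum_prod)

lemma vscale_sum_left: "vscale (sum f S) v = (\<Sum>i\<in>S. vscale (f i) v)"
  by (cases v rule: prod_cases3) (simp add: vscale_def sum_prod sum_distrib_right)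

section \<open>Exactness of the Koszul complex\<close>

definition component_ideal :: "'a::idom vfield \<Rightarrow> 'a mpoly3 set" where
  "component_ideal f = range (\<lambda>u. vdot u f)"

lemma jac_ideal_eq_component_ideal: "jac_ideal phi = component_ideal (grad phi)"
proof -
  have "a * dX phi + b * dY phi + c * dZ phi = vdot (a, b, c) (grad phi)" for a b c
    by (simp add: vdot_def grad_def)
  then show ?thesis
    unfolding jac_ideal_def component_ideal_def by auto
qed

context
  fixes f :: "'a::idom vfield"
begin

lemma component_ideal_0: "0 \<in> component_ideal f"
  unfolding component_ideal_def by (metis rangeI vdot_0_left)

lemma component_ideal_add:
  assumes "p \<in> component_ideal f" and "q \<in> component_ideal f"
  shows "p + q \<in> component_ideal f"
proof -
  obtain u v where "p = vdot u f" and "q = vdot v f"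
    using assms unfolding component_ideal_def by blast
  then have "p + q = vdot (u + v) f" by (simp add: vdot_add_left)
  then show ?thesis unfolding component_ideal_def by blast
qed

lemma component_ideal_mult:
  assumes "p \<in> component_ideal f"
  shows "r * p \<in> component_ideal f"
proof -
  obtain u where "p = vdot u f"
    using assms unfolding component_ideal_def by blast
  then have "r * p = vdot (vscale r u) f" by (simp add: vdot_vscale_left)
  then show ?thesis unfolding component_ideal_def by blast
qed

lemma component_ideal_sum: "(\<And>i. i \<in> S \<Longrightarrow> g i \<in> component_ideal f) \<Longrightarrow> sum g S \<in> component_ideal f"
  by (induction S rule: infinite_finite_induct) (auto intro: component_ideal_add component_ideal_0)

end

lemma z_pow_dvd_iff: "z_pow c dvd (p :: 'a::idom mpoly3) \<longleftrightarrow> (\<forall>a b k. k < c \<longrightarrow> coeff3 p a b k = 0)"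
  unfolding z_pow_def monom_1_dvd_iff' coeff3_def by (auto simp: poly_eq_iff)

lemma y_pow_dvd_iff: "y_pow b dvd (p :: 'a::idom mpoly3) \<longleftrightarrow> (\<forall>a j k. j < b \<longrightarrow> coeff3 p a j k = 0)"
  unfolding y_pow_def const_poly_dvd_iff monom_1_dvd_iff' coeff3_def by (auto simp: poly_eq_iff)

lemma mem_yz_ideal_iff:
  "(t :: 'a::idom mpoly3) \<in> component_ideal (0, y_pow b, z_pow c) \<longleftrightarrow>
    (\<forall>a j k. j < b \<longrightarrow> k < c \<longrightarrow> coeff3 t a j k = 0)"
proof
  assume "t \<in> component_ideal (0, y_pow b, z_pow c)"
  then obtain P Q where "t = y_pow b * P + z_pow c * Q"
    unfolding component_ideal_def by (auto simp: vdot_def mult.commute split: prod.splits)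
  then show "\<forall>a j k. j < b \<longrightarrow> k < c \<longrightarrow> coeff3 t a j k = 0"
    by (simp add: coeff3_y_pow_mult coeff3_z_pow_mult)
next
  assume vanish: "\<forall>a j k. j < b \<longrightarrow> k < c \<longrightarrow> coeff3 t a j k = 0"
  define t_low where "t_low = (\<Sum>k<c. monom (coeff t k) k)"
  have coeff3_t_low: "coeff3 t_low a j k = (if k < c then coeff3 t a j k else 0)" for a j k
    by (simp add: t_low_def coeff3_def coeff_sum coeff_monom)
  obtain P where P: "t_low = y_pow b * P"
    using vanish by (metis coeff3_t_low y_pow_dvd_iff dvdE)
  obtain Q where Q: "t - t_low = z_pow c * Q"
    by (metis coeff3_diff coeff3_t_low diff_self z_pow_dvd_iff dvdE)
  have "t = vdot (0, P, Q) (0, y_pow b, z_pow c)"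
    using P Q by (simp add: vdot_def algebra_simps)
  then show "t \<in> component_ideal (0, y_pow b, z_pow c)"
    unfolding component_ideal_def by blast
qed

lemma z_pow_dvd_cancel_y_pow:
  assumes "z_pow c dvd y_pow b * p"
  shows "z_pow c dvd (p :: 'a::idom mpoly3)"
proof -
  have "coeff3 p i j k = coeff3 (y_pow b * p) i (j + b) k" for i j k
    by (simp add: coeff3_y_pow_mult)
  then show ?thesis using assms unfolding z_pow_dvd_iff by presburger
qed

lemma yz_ideal_cancel_x_pow:
  assumes "x_pow a * t \<in> component_ideal (0, y_pow b, z_pow c)"
  shows "(t :: 'a::idom mpoly3) \<in> component_ideal (0, y_pow b, z_pow c)"
proof -
  have "coeff3 t i j k = coeff3 (x_pow a * t) (i + a) j k" for i j k
    by (simp add: coeff3_x_pow_mult)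
  then show ?thesis using assms unfolding mem_yz_ideal_iff by presburger
qed

lemma vscale_z_pow_cancel_y_pow:
  assumes "vscale (y_pow b) V = vscale (z_pow c) W"
  shows "\<exists>R. V = vscale (z_pow c) (R :: 'a::idom vfield)"
proof -
  obtain V1 V2 V3 where V: "V = (V1, V2, V3)" by (cases V)
  obtain W1 W2 W3 where W: "W = (W1, W2, W3)" by (cases W)
  have "y_pow b * V1 = z_pow c * W1" "y_pow b * V2 = z_pow c * W2" "y_pow b * V3 = z_pow c * W3"
    using assms by (simp_all add: V W vscale_def)
  then have "z_pow c dvd V1" "z_pow c dvd V2" "z_pow c dvd V3"
    by (metis dvd_triv_left z_pow_dvd_cancel_y_pow)+
  then obtain R1 R2 R3 where "V1 = z_pow c * R1" "V2 = z_pow c * R2" "V3 = z_pow c * R3"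
    by (elim dvdE)
  then show ?thesis by (auto simp: V vscale_def)
qed

text \<open>Here the pure powers enter: \<open>y\<^sup>b\<close> is a nonzerodivisor modulo \<open>z\<^sup>c\<close>, and \<open>x\<^sup>a\<close>
  one modulo \<open>(y\<^sup>b, z\<^sup>c)\<close>.\<close>

lemma vcross_eq_z_pow_multiple:
  assumes x: "x_pow a \<in> component_ideal f" and y: "y_pow b \<in> component_ideal f"
    and G: "vcross G f = vscale (z_pow c) B"
  shows "\<exists>q R. G = vscale q f + vscale (z_pow c) (R :: 'a::idom vfield)"
proof -
  let ?I = "component_ideal (0, y_pow b, z_pow c) :: 'a mpoly3 set"
  obtain m where m: "y_pow b = vdot m f" using y unfolding component_ideal_def by blast
  define t where "t = vdot m G"
  have "vcross m (vcross G f) = vscale (y_pow b) G - vscale t f"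
    by (simp add: vcross_vcross m t_def)
  then have t_f: "vscale t f = vscale (y_pow b) G - vscale (z_pow c) (vcross m B)"
    by (simp add: G vcross_vscale_right)
  have t_mult: "t * p \<in> ?I" if p: "p \<in> component_ideal f" for p
  proof -
    obtain n where "p = vdot n f" using p unfolding component_ideal_def by blast
    then have "t * p = vdot n (vscale t f)"
      by (simp add: vdot_vscale_right)
    also have "\<dots> = y_pow b * vdot n G - z_pow c * vdot n (vcross m B)"
      by (simp add: t_f vdot_diff_right vdot_vscale_right)
    also have "\<dots> = vdot (0, vdot n G, - vdot n (vcross m B)) (0, y_pow b, z_pow c)"
      by (simp add: vdot_def algebra_simps)
    finally have "t * p = vdot (0, vdot n G, - vdot n (vcross m B)) (0, y_pow b, z_pow c)" .
    then show ?thesis unfolding component_ideal_def by blast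
  qed
  have "x_pow a * t \<in> ?I" using t_mult[OF x] by (simp add: mult.commute)
  then have "t \<in> ?I" by (rule yz_ideal_cancel_x_pow)
  then obtain q p where t: "t = y_pow b * q + z_pow c * p"
    unfolding component_ideal_def by (auto simp: vdot_def mult.commute split: prod.splits)
  have "vscale (y_pow b) (G - vscale q f) = vscale (y_pow b) G - vscale (t - z_pow c * p) f"
    by (simp add: t vscale_diff_right vscale_mult)
  also have "\<dots> = vscale (z_pow c) (vcross m B + vscale p f)"
    by (simp add: t_f vscale_diff_left vscale_add_right vscale_mult)
  finally obtain R where "G - vscale q f = vscale (z_pow c) R"
    using vscale_z_pow_cancel_y_pow by blast
  then show ?thesis by (metis diff_add_cancel add.commute)
qed

lemma koszul_syzygy:
  assumes x: "x_pow a \<in> component_ideal f" and y: "y_pow b \<in> component_ideal f"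
    and z: "z_pow c \<in> component_ideal f" and syz: "vdot A f = 0"
  shows "\<exists>G. A = vcross G (f :: 'a::idom vfield)"
proof -
  obtain l where l: "z_pow c = vdot l f" using z unfolding component_ideal_def by blast
  have "vcross (vcross l A) f = vscale (z_pow c) A"
    by (simp add: vcross_vcross_left l syz)
  then obtain q R where qR: "vcross l A = vscale q f + vscale (z_pow c) R"
    using vcross_eq_z_pow_multiple[OF x y] by blast
  have "vscale (z_pow c) A = vscale (z_pow c) (vcross R f)"
    using \<open>vcross (vcross l A) f = vscale (z_pow c) A\<close>
    by (simp add: qR vcross_add_left vcross_vscale_left)
  then have "A = vcross R f"
    by (simp add: vscale_cancel z_pow_def)
  then show ?thesis ..
qed

section \<open>Weighted homogeneous components\<close>

definition map_poly_idx :: "(nat \<Rightarrow> 'a::zero \<Rightarrow> 'b::zero) \<Rightarrow> 'a poly \<Rightarrow> 'b poly" where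
  "map_poly_idx f p = Abs_poly (\<lambda>n. f n (coeff p n))"

lemma coeff_map_poly_idx:
  assumes "\<And>n. f n 0 = 0"
  shows "coeff (map_poly_idx f p) n = f n (coeff p n)"
proof -
  have "coeff (Abs_poly (\<lambda>n. f n (coeff p n))) = (\<lambda>n. f n (coeff p n))"
    by (rule coeff_Abs_poly[where n = "degree p"]) (simp add: coeff_eq_0 assms)
  then show ?thesis by (simp add: map_poly_idx_def)
qed

lemma map_poly_idx_0: "(\<And>n. f n 0 = 0) \<Longrightarrow> map_poly_idx f 0 = 0"
  by (rule poly_eqI) (simp add: coeff_map_poly_idx)

lemma finite_coeff3_support: "finite {(a, b, c). coeff3 p a b c \<noteq> 0}"
proof (rule finite_subset)
  show "{(a, b, c). coeff3 p a b c \<noteq> 0} \<subseteq>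
      (\<Union>c\<le>degree p. \<Union>b\<le>degree (coeff p c). (\<lambda>a. (a, b, c)) ` {..degree (coeff (coeff p c) b)})"
  proof safe
    fix a b c assume "coeff3 p a b c \<noteq> 0"
    then have "coeff (coeff (coeff p c) b) a \<noteq> 0" "coeff (coeff p c) b \<noteq> 0" "coeff p c \<noteq> 0"
      by (auto simp: coeff3_def)
    then show "(a, b, c) \<in> (\<Union>c\<le>degree p. \<Union>b\<le>degree (coeff p c).
        (\<lambda>a. (a, b, c)) ` {..degree (coeff (coeff p c) b)})"
      by (auto intro!: le_degree)
  qed
qed simp

locale weights =
  fixes w1 w2 w3 :: nat
  assumes w1_pos: "w1 > 0" and w2_pos: "w2 > 0" and w3_pos: "w3 > 0"
begin

definition wt :: "nat \<Rightarrow> nat \<Rightarrow> nat \<Rightarrow> int" where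
  "wt a b c = int (a * w1 + b * w2 + c * w3)"

text \<open>Unlike \<open>weight_homogeneous\<close>, \<open>homog\<close> admits the zero polynomial and every degree.\<close>

definition homog :: "int \<Rightarrow> 'a::zero mpoly3 \<Rightarrow> bool" where
  "homog E p \<longleftrightarrow> (\<forall>a b c. coeff3 p a b c \<noteq> 0 \<longrightarrow> wt a b c = E)"

definition homog_part :: "int \<Rightarrow> 'a::zero mpoly3 \<Rightarrow> 'a mpoly3" where
  "homog_part E p = map_poly_idx (\<lambda>c q. map_poly_idx (\<lambda>b r.
     map_poly_idx (\<lambda>a e. if wt a b c = E then e else 0) r) q) p"

lemma wt_nonneg: "wt a b c \<ge> 0"
  by (simp add: wt_def)
lemma wt_Suc1: "wt (Suc a) b c = wt a b c + int w1"
  by (simp add: wt_def)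
lemma wt_Suc2: "wt a (Suc b) c = wt a b c + int w2"
  by (simp add: wt_def)
lemma wt_Suc3: "wt a b (Suc c) = wt a b c + int w3"
  by (simp add: wt_def)

lemma coeff3_homog_part:
  "coeff3 (homog_part E p) a b c = (if wt a b c = E then coeff3 p a b c else 0)"
  unfolding homog_part_def coeff3_def by (simp add: coeff_map_poly_idx map_poly_idx_0)

lemma homog_homog_part: "homog E (homog_part E p)"
  by (simp add: homog_def coeff3_homog_part)

lemma homog_part_homog: "homog E' p \<Longrightarrow> homog_part E p = (if E = E' then p else 0)"
  unfolding homog_def by (intro coeff3_eqI) (auto simp: coeff3_homog_part)

lemma homog_part_0 [simp]: "homog_part E 0 = 0"
  by (rule coeff3_eqI) (simp add: coeff3_homog_part)
lemma homog_part_add: "homog_part E (p + q) = homog_part E p + homog_part E q"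
  by (rule coeff3_eqI) (simp add: coeff3_homog_part)
lemma homog_part_diff: "homog_part E (p - q)
    = homog_part E p - homog_part E (q :: 'a::ab_group_add mpoly3)"
  by (rule coeff3_eqI) (simp add: coeff3_homog_part)
lemma homog_part_sum: "homog_part E (sum f S) = (\<Sum>i\<in>S. homog_part E (f i))"
  by (rule coeff3_eqI) (simp add: coeff3_homog_part coeff3_sum)
lemma homog_part_const3_mult: "homog_part E (const3 k * p) = const3 k * homog_part E p"
  by (rule coeff3_eqI) (simp add: coeff3_homog_part coeff3_const3_mult)

lemma homog_part_dX: "homog_part E (dX p) = dX (homog_part (E + w1) p)"
  by (rule coeff3_eqI) (simp add: coeff3_homog_part coeff3_dX wt_def)
lemma homog_part_dY: "homog_part E (dY p) = dY (homog_part (E + w2) p)"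
  by (rule coeff3_eqI) (simp add: coeff3_homog_part coeff3_dY wt_def)
lemma homog_part_dZ: "homog_part E (dZ p) = dZ (homog_part (E + w3) p)"
  by (rule coeff3_eqI) (simp add: coeff3_homog_part coeff3_dZ wt_def)

lemma homog_0 [simp]: "homog E 0"
  by (simp add: homog_def)
lemma homog_add: "homog E p \<Longrightarrow> homog E q \<Longrightarrow> homog E (p + q)"
  unfolding homog_def by (metis add.right_neutral add_0 coeff3_add)
lemma homog_diff: "homog E p \<Longrightarrow> homog E q \<Longrightarrow> homog E (p - q :: 'a::ab_group_add mpoly3)"
  unfolding homog_def by (metis coeff3_diff diff_zero diff_self)
lemma homog_const3_mult: "homog E p \<Longrightarrow> homog E (const3 k * p)"
  unfolding homog_def by (metis coeff3_const3_mult mult_zero_right)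

lemma homog_dX: "homog E p \<Longrightarrow> homog (E - w1) (dX p)"
  unfolding homog_def by (auto simp: coeff3_dX) (metis wt_Suc1 add_diff_cancel_right')
lemma homog_dY: "homog E p \<Longrightarrow> homog (E - w2) (dY p)"
  unfolding homog_def by (auto simp: coeff3_dY) (metis wt_Suc2 add_diff_cancel_right')
lemma homog_dZ: "homog E p \<Longrightarrow> homog (E - w3) (dZ p)"
  unfolding homog_def by (auto simp: coeff3_dZ) (metis wt_Suc3 add_diff_cancel_right')

lemma homog_x_pow: "homog (int n * int w1) (x_pow n)"
  by (simp add: homog_def coeff3_x_pow wt_def)
lemma homog_y_pow: "homog (int n * int w2) (y_pow n)"
  by (simp add: homog_def coeff3_y_pow wt_def)
lemma homog_z_pow: "homog (int n * int w3) (z_pow n)"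
  by (simp add: homog_def coeff3_z_pow wt_def)

lemma homog_neg_eq_0: "homog E p \<Longrightarrow> E < 0 \<Longrightarrow> p = 0"
  unfolding homog_def by (intro coeff3_eqI) (metis coeff3_0 not_le wt_nonneg)

lemma sum_homog_part:
  assumes "finite S" and "\<And>a b c. coeff3 p a b c \<noteq> 0 \<Longrightarrow> wt a b c + s \<in> S"
  shows "(\<Sum>D\<in>S. homog_part (D - s) p) = p"
proof (rule coeff3_eqI)
  fix a b c
  have "coeff3 (\<Sum>D\<in>S. homog_part (D - s) p) a b c
      = (\<Sum>D\<in>S. if wt a b c = D - s then coeff3 p a b c else 0)"
    by (simp add: coeff3_sum coeff3_homog_part)
  also have "\<dots> = (\<Sum>D\<in>S. if D = wt a b c + s then coeff3 p a b c else 0)"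
    by (rule sum.cong) auto
  also have "\<dots> = coeff3 p a b c"
    using assms(1) assms(2)[of a b c] by (cases "coeff3 p a b c = 0") (simp_all add: sum.delta)
  finally show "coeff3 (\<Sum>D\<in>S. homog_part (D - s) p) a b c = coeff3 p a b c" .
qed

definition euler :: "'a::idom mpoly3 \<Rightarrow> 'a mpoly3" where
  "euler p = const3 (of_nat w1) * (x_pow 1 * dX p) + const3 (of_nat w2) * (y_pow 1 * dY p)
     + const3 (of_nat w3) * (z_pow 1 * dZ p)"

lemma coeff3_euler: "coeff3 (euler p) a b c = of_int (wt a b c) * coeff3 p a b c"
proof -
  have x: "coeff3 (x_pow 1 * dX p) a b c = of_nat a * coeff3 p a b c"
    by (cases a) (auto simp: coeff3_x_pow_mult coeff3_dX)
  have y: "coeff3 (y_pow 1 * dY p) a b c = of_nat b * coeff3 p a b c"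
    by (cases b) (auto simp: coeff3_y_pow_mult coeff3_dY)
  have z: "coeff3 (z_pow 1 * dZ p) a b c = of_nat c * coeff3 p a b c"
    by (cases c) (auto simp: coeff3_z_pow_mult coeff3_dZ)
  show ?thesis
    unfolding euler_def coeff3_add coeff3_const3_mult x y z by (simp add: wt_def algebra_simps)
qed

lemma euler_mult: "euler (p * q) = euler p * q + p * euler q"
  by (simp add: euler_def algebra_simps)

lemma homog_iff_euler:
  "homog E p \<longleftrightarrow> euler p = const3 (of_int E) * (p :: 'a::{idom, ring_char_0} mpoly3)"
proof
  assume "homog E p"
  then show "euler p = const3 (of_int E) * p"
    by (intro coeff3_eqI) (auto simp: coeff3_euler coeff3_const3_mult homog_def)
next
  assume euler: "euler p = const3 (of_int E) * p"
  show "homog E p" unfolding homog_def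
  proof (intro allI impI)
    fix a b c assume "coeff3 p a b c \<noteq> 0"
    moreover have "of_int (wt a b c) * coeff3 p a b c = (of_int E :: 'a) * coeff3 p a b c"
      using arg_cong[OF euler, of "\<lambda>q. coeff3 q a b c"]
        by (simp add: coeff3_euler coeff3_const3_mult)
    ultimately show "wt a b c = E" by simp
  qed
qed

lemma homog_mult:
  "homog D p \<Longrightarrow> homog E q \<Longrightarrow> homog (D + E) (p * q :: 'a::{idom, ring_char_0} mpoly3)"
  unfolding homog_iff_euler by (simp add: euler_mult const3_add algebra_simps)

lemma homog_part_mult:
  assumes q: "homog e q"
  shows "homog_part E (p * q) = homog_part (E - e) p * (q :: 'a::{idom, ring_char_0} mpoly3)"
proof -
  define S where "S = insert (E - e) ((\<lambda>(a, b, c). wt a b c) ` {(a, b, c). coeff3 p a b c \<noteq> 0})"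
  have S: "finite S" "E - e \<in> S"
    unfolding S_def using finite_imageI[OF finite_coeff3_support] by simp_all
  have "wt a b c \<in> S" if "coeff3 p a b c \<noteq> 0" for a b c
    unfolding S_def by (rule insertI2, rule image_eqI[where x = "(a, b, c)"]) (use that in auto)
  then have p: "(\<Sum>D\<in>S. homog_part D p) = p"
    using sum_homog_part[OF S(1), of p 0] by simp
  have "homog_part E (p * q) = homog_part E ((\<Sum>D\<in>S. homog_part D p) * q)"
    by (simp only: p)
  also have "\<dots> = (\<Sum>D\<in>S. homog_part E (homog_part D p * q))"
    by (simp add: sum_distrib_right homog_part_sum)
  also have "\<dots> = (\<Sum>D\<in>S. if D = E - e then homog_part D p * q else 0)"
    by (intro sum.cong refl) (simp add: homog_part_homog[OF homog_mult[OF homog_homog_part q]])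
  also have "\<dots> = homog_part (E - e) p * q"
    using S by simp
  finally show ?thesis .
qed



text \<open>\<open>hom_form1 D (h1, h2, h3)\<close> says that the 1-form \<open>h1 dx + h2 dy + h3 dz\<close> is
  weighted homogeneous of degree \<open>D\<close>, the differentials \<open>dx, dy, dz\<close> having weights
  \<open>w1, w2, w3\<close>.\<close>

definition hom_form1 :: "int \<Rightarrow> 'a::idom vfield \<Rightarrow> bool" where
  "hom_form1 D h \<longleftrightarrow> (case h of (h1, h2, h3) \<Rightarrow>
     homog (D - w1) h1 \<and> homog (D - w2) h2 \<and> homog (D - w3) h3)"

definition homog_part_form1 :: "int \<Rightarrow> 'a::idom vfield \<Rightarrow> 'a vfield" where
  "homog_part_form1 D h = (case h of (h1, h2, h3) \<Rightarrow>
     (homog_part (D - w1) h1, homog_part (D - w2) h2, homog_part (D - w3) h3))"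

lemma hom_form1_homog_part_form1: "hom_form1 D (homog_part_form1 D h)"
  by (simp add: hom_form1_def homog_part_form1_def homog_homog_part split: prod.splits)

lemma hom_form1_grad: "homog D F \<Longrightarrow> hom_form1 D (grad F)"
  by (simp add: hom_form1_def grad_def homog_dX homog_dY homog_dZ)

lemma hom_form1_diff: "hom_form1 D u \<Longrightarrow> hom_form1 D v \<Longrightarrow> hom_form1 D (u - v)"
  by (cases u rule: prod_cases3; cases v rule: prod_cases3) (simp add: hom_form1_def homog_diff)

lemma hom_form1_vscale:
  assumes g: "homog e g" and v: "hom_form1 D v"
  shows "hom_form1 (D + e) (vscale g (v :: 'a::{idom, ring_char_0} vfield))"
proof -
  obtain v1 v2 v3 where v_eq: "v = (v1, v2, v3)" by (cases v)
  have "homog (e + (D - w1)) (g * v1)"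
    "homog (e + (D - w2)) (g * v2)" "homog (e + (D - w3)) (g * v3)"
    using v by (auto simp: v_eq hom_form1_def intro: homog_mult[OF g])
  then show ?thesis
    by (simp add: v_eq hom_form1_def vscale_def add.commute add_diff_eq)
qed

lemma hom_form1_nonpos_eq_0:
  assumes "hom_form1 D h" and "D \<le> 0"
  shows "h = 0"
proof -
  obtain h1 h2 h3 where h: "h = (h1, h2, h3)" by (cases h)
  have "D - w1 < 0" "D - w2 < 0" "D - w3 < 0"
    using assms(2) w1_pos w2_pos w3_pos by simp_all
  moreover have "homog (D - w1) h1" "homog (D - w2) h2" "homog (D - w3) h3"
    using assms(1) by (simp_all add: h hom_form1_def)
  ultimately show ?thesis
    by (simp add: h vfield_zero homog_neg_eq_0)
qed

lemma sum_homog_part_form1: "\<exists>S. finite S \<and> (\<Sum>D\<in>S. homog_part_form1 D h) = h"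
proof -
  obtain h1 h2 h3 where h: "h = (h1, h2, h3)" by (cases h)
  define weights_of where "weights_of p s = (\<lambda>(a, b, c). wt a b c + s)
      ` {(a, b, c). coeff3 p a b c \<noteq> 0}"
    for p :: "'a mpoly3" and s
  define S where "S = weights_of h1 w1 \<union> weights_of h2 w2 \<union> weights_of h3 w3"
  have fin: "finite S"
    by (simp add: S_def weights_of_def finite_imageI[OF finite_coeff3_support])
  have mem: "wt a b c + s \<in> weights_of p s" if "coeff3 p a b c \<noteq> 0" for p a b c s
    unfolding weights_of_def by (rule image_eqI[where x = "(a, b, c)"]) (use that in auto)
  have "(\<Sum>D\<in>S. homog_part (D - w1) h1) = h1" "(\<Sum>D\<in>S. homog_part (D - w2) h2) = h2"
    "(\<Sum>D\<in>S. homog_part (D - w3) h3) = h3"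
    by (rule sum_homog_part[OF fin], use mem in \<open>simp add: S_def\<close>)+
  then have "(\<Sum>D\<in>S. homog_part_form1 D h) = h"
    by (simp add: h homog_part_form1_def sum_prod)
  with fin show ?thesis by blast
qed

lemma homog_part_vdot_curl:
  assumes "hom_form1 d f"
  shows "homog_part (D + d - w1 - w2 - w3) (vdot (curl h) f)
    = vdot (curl (homog_part_form1 D h)) (f :: 'a::{idom, ring_char_0} vfield)"
proof -
  obtain h1 h2 h3 where h: "h = (h1, h2, h3)" by (cases h)
  obtain f1 f2 f3 where f: "f = (f1, f2, f3)" by (cases f)
  have f1: "homog (d - w1) f1" and f2: "homog (d - w2) f2" and f3: "homog (d - w3) f3"
    using assms by (simp_all add: f hom_form1_def)
  show ?thesis
    unfolding h f vdot_def curl_def homog_part_form1_def prod.case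
    by (simp only: homog_part_add homog_part_diff homog_part_mult[OF f1] homog_part_mult[OF f2]
        homog_part_mult[OF f3] homog_part_dX homog_part_dY homog_part_dZ)
      (simp add: algebra_simps)
qed

lemma curl_eq_vcross_homog_part:
  assumes "hom_form1 d f" and "hom_form1 D h" and curl_h: "curl h = vcross G f"
  shows "curl h = vcross (homog_part_form1 (D - d) G) (f :: 'a::{idom, ring_char_0} vfield)"
proof -
  obtain h1 h2 h3 where h: "h = (h1, h2, h3)" by (cases h)
  obtain f1 f2 f3 where f: "f = (f1, f2, f3)" by (cases f)
  have f1: "homog (d - w1) f1" and f2: "homog (d - w2) f2" and f3: "homog (d - w3) f3"
    using assms(1) by (simp_all add: f hom_form1_def)
  have h1: "homog (D - w1) h1" and h2: "homog (D - w2) h2" and h3: "homog (D - w3) h3"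
    using assms(2) by (simp_all add: h hom_form1_def)
  have "homog (D - w2 - w3) (dY h3 - dZ h2)" "homog (D - w1 - w3) (dZ h1 - dX h3)"
    "homog (D - w1 - w2) (dX h2 - dY h1)"
    using homog_dX[OF h2] homog_dX[OF h3] homog_dY[OF h1] homog_dY[OF h3]
      homog_dZ[OF h1] homog_dZ[OF h2]
    by (simp_all add: homog_diff algebra_simps)
  then have "curl h = (homog_part (D - w2 - w3) (fst (curl h)),
      homog_part (D - w1 - w3) (fst (snd (curl h))), homog_part (D - w1 - w2) (snd (snd (curl h))))"
    by (simp add: h curl_def homog_part_homog)
  also have "\<dots> = vcross (homog_part_form1 (D - d) G) f"
    unfolding curl_h f vcross_def homog_part_form1_def
    by (simp only: prod.case prod.sel homog_part_diff homog_part_mult[OF f1] homog_part_mult[OF f2]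
        homog_part_mult[OF f3] split: prod.splits) (simp add: algebra_simps)
  finally show ?thesis .
qed

definition euler_contraction :: "'a::idom vfield \<Rightarrow> 'a mpoly3" where
  "euler_contraction k = (case k of (k1, k2, k3) \<Rightarrow> const3 (of_nat w1) * (x_pow 1 * k1)
     + const3 (of_nat w2) * (y_pow 1 * k2) + const3 (of_nat w3) * (z_pow 1 * k3))"

lemma homog_euler_contraction:
  assumes "hom_form1 D k"
  shows "homog D (euler_contraction (k :: 'a::{idom, ring_char_0} vfield))"
proof -
  obtain k1 k2 k3 where k: "k = (k1, k2, k3)" by (cases k)
  have "homog D (x_pow 1 * k1)" "homog D (y_pow 1 * k2)" "homog D (z_pow 1 * k3)"
    using assms homog_mult[OF homog_x_pow[of 1]] homog_mult[OF homog_y_pow[of 1]]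
      homog_mult[OF homog_z_pow[of 1]]
    by (fastforce simp: k hom_form1_def)+
  then show ?thesis
    by (simp add: k euler_contraction_def homog_add homog_const3_mult)
qed

lemma grad_euler_contraction:
  assumes hom: "hom_form1 D k" and closed: "curl k = 0"
  shows "grad (euler_contraction k)
    = vscale (const3 (of_int D)) (k :: 'a::{idom, ring_char_0} vfield)"
proof -
  obtain k1 k2 k3 where k: "k = (k1, k2, k3)" by (cases k)
  have k1: "homog (D - w1) k1" and k2: "homog (D - w2) k2" and k3: "homog (D - w3) k3"
    using hom by (simp_all add: k hom_form1_def)
  have c1: "dY k3 = dZ k2" and c2: "dZ k1 = dX k3" and c3: "dX k2 = dY k1"
    using closed by (simp_all add: k curl_def vfield_zero)
  have euler_eq: "const3 (of_nat w) * p + euler p = const3 (of_int D) * p"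
    if "homog (D - w) p" for w and p :: "'a mpoly3"
  proof -
    have "const3 (of_nat w) * p + euler p = const3 (of_nat w + of_int (D - w)) * p"
      using that by (simp only: homog_iff_euler const3_add distrib_right)
    then show ?thesis by simp
  qed
  have "dX (euler_contraction k) = const3 (of_nat w1) * k1 + euler k1"
    unfolding k euler_contraction_def euler_def by (simp add: c2[symmetric] c3 algebra_simps)
  moreover have "dY (euler_contraction k) = const3 (of_nat w2) * k2 + euler k2"
    unfolding k euler_contraction_def euler_def by (simp add: c1 c3[symmetric] algebra_simps)
  moreover have "dZ (euler_contraction k) = const3 (of_nat w3) * k3 + euler k3"
    unfolding k euler_contraction_def euler_def by (simp add: c1[symmetric] c2 algebra_simps)
  ultimately show ?thesis
    by (simp add: k grad_def vscale_def euler_eq[OF k1] euler_eq[OF k2] euler_eq[OF k3])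
qed

lemma closed_hom_form1_eq_grad:
  assumes hom: "hom_form1 D k" and closed: "curl k = 0"
  shows "\<exists>F. homog D F \<and> k = grad (F :: 'a::field_char_0 mpoly3)"
proof (cases "D = 0")
  case True
  then have "k = 0" using hom_form1_nonpos_eq_0[OF hom] by simp
  then show ?thesis by (intro exI[of _ 0]) (simp add: grad_def vfield_zero)
next
  case False
  define F where "F = const3 (inverse (of_int D)) * euler_contraction k"
  have "homog D F"
    unfolding F_def by (intro homog_const3_mult homog_euler_contraction hom)
  moreover have "k = grad F"
    using grad_euler_contraction[OF hom closed] False
    by (cases k rule: prod_cases3) (simp add: F_def grad_def vscale_def const3_inverse_mult)
  ultimately show ?thesis by blast
qed

lemma component_ideal_homog_part:
  assumes "hom_form1 d f" and "p \<in> component_ideal f"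
  shows "homog_part E p \<in> component_ideal (f :: 'a::{idom, ring_char_0} vfield)"
proof -
  obtain f1 f2 f3 where f: "f = (f1, f2, f3)" by (cases f)
  have f1: "homog (d - w1) f1" and f2: "homog (d - w2) f2" and f3: "homog (d - w3) f3"
    using assms(1) by (simp_all add: f hom_form1_def)
  obtain u1 u2 u3 where "p = vdot (u1, u2, u3) f"
    using assms(2) unfolding component_ideal_def by (metis rangeE prod_cases3)
  then have "homog_part E p = vdot (homog_part (E - (d - w1)) u1, homog_part (E - (d - w2)) u2,
      homog_part (E - (d - w3)) u3) f"
    by (simp add: f vdot_def homog_part_add homog_part_mult[OF f1] homog_part_mult[OF f2]
        homog_part_mult[OF f3])
  then show ?thesis unfolding component_ideal_def by blast
qed

end

section \<open>Pure powers in the Jacobian ideal\<close>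

lemma nontrivial_linear_relation:
  fixes K :: "'i \<Rightarrow> 's \<Rightarrow> 'a::field"
  assumes "finite S" and "finite I" and "card S < card I"
  shows "\<exists>c. (\<exists>i\<in>I. c i \<noteq> 0) \<and> (\<forall>s\<in>S. (\<Sum>i\<in>I. c i * K i s) = 0)"
  using assms
proof (induction S arbitrary: I K rule: finite_induct)
  case empty
  then obtain i where "i \<in> I" by fastforce
  then show ?case by (intro exI[of _ "\<lambda>j. if j = i then 1 else 0"]) auto
next
  case (insert s0 S)
  show ?case
  proof (cases "\<forall>i\<in>I. K i s0 = 0")
    case True
    obtain c where "\<exists>i\<in>I. c i \<noteq> 0" "\<forall>s\<in>S. (\<Sum>i\<in>I. c i * K i s) = 0"
      using insert.IH[of I K] insert.prems insert.hyps by auto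
    then show ?thesis using True by (intro exI[of _ c]) auto
  next
    case False
    then obtain i0 where i0: "i0 \<in> I" "K i0 s0 \<noteq> 0" by blast
    define I' where "I' = I - {i0}"
    text \<open>Eliminate \<open>s0\<close> using the row \<open>i0\<close>, as in Gaussian elimination.\<close>
    define K' where "K' i s = K i s * K i0 s0 - K i0 s * K i s0" for i s
    have "finite I'" "card S < card I'"
      using insert i0 by (simp_all add: I'_def)
    then obtain c' where c': "\<exists>i\<in>I'. c' i \<noteq> 0" "\<forall>s\<in>S. (\<Sum>i\<in>I'. c' i * K' i s) = 0"
      using insert.IH[of I' K'] by blast
    define c where "c i = (if i = i0 then - (\<Sum>j\<in>I'. c' j * K j s0) else c' i * K i0 s0)" for i
    have relation: "(\<Sum>i\<in>I. c i * K i s) = (\<Sum>i\<in>I'. c' i * K' i s)" for s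
    proof -
      have "(\<Sum>i\<in>I. c i * K i s) = c i0 * K i0 s + (\<Sum>i\<in>I'. c' i * K i0 s0 * K i s)"
        using i0 insert.prems by (simp add: I'_def c_def sum.remove)
      also have "\<dots> = (\<Sum>i\<in>I'. c' i * K i0 s0 * K i s - c' i * K i s0 * K i0 s)"
        by (simp add: c_def sum_subtractf sum_distrib_right)
      also have "\<dots> = (\<Sum>i\<in>I'. c' i * K' i s)"
        by (rule sum.cong) (simp_all add: K'_def algebra_simps)
      finally show ?thesis .
    qed
    show ?thesis
    proof (intro exI[of _ c] conjI)
      show "\<exists>i\<in>I. c i \<noteq> 0"
        using c'(1) i0 by (auto simp: c_def I'_def)
      have "K' i s0 = 0" for i by (simp add: K'_def)
      then show "\<forall>s\<in>insert s0 S. (\<Sum>i\<in>I. c i * K i s) = 0"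
        using c'(2) by (simp add: relation)
    qed
  qed
qed

lemma finite_codim_linear_dependence:
  assumes "finite S" and span: "\<forall>p. \<exists>k. p - (\<Sum>s\<in>S. const3 (k s) * s) \<in> component_ideal f"
    and "finite I" and "card S < card I"
  shows "\<exists>c. (\<exists>i\<in>I. c i \<noteq> 0) \<and> (\<Sum>i\<in>I. const3 (c i) * m i) \<in> component_ideal (f :: 'a::field vfield)"
proof -
  have "\<exists>K. \<forall>i. m i - (\<Sum>s\<in>S. const3 (K i s) * s) \<in> component_ideal f"
    using span by (intro choice) blast
  then obtain K where K: "\<And>i. m i - (\<Sum>s\<in>S. const3 (K i s) * s) \<in> component_ideal f"
    by blast
  obtain c where c: "\<exists>i\<in>I. c i \<noteq> 0" "\<forall>s\<in>S. (\<Sum>i\<in>I. c i * K i s) = 0"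
    using nontrivial_linear_relation[OF assms(1,3,4)] by blast
  have "(\<Sum>s\<in>S. const3 (\<Sum>i\<in>I. c i * K i s) * s)
      = (\<Sum>s\<in>S. \<Sum>i\<in>I. const3 (c i) * (const3 (K i s) * s))"
    by (simp add: const3_sum const3_mult sum_distrib_right mult.assoc)
  also have "\<dots> = (\<Sum>i\<in>I. const3 (c i) * (\<Sum>s\<in>S. const3 (K i s) * s))"
    by (subst sum.swap) (simp add: sum_distrib_left)
  finally have "(\<Sum>i\<in>I. const3 (c i) * m i)
      = (\<Sum>i\<in>I. const3 (c i) * (m i - (\<Sum>s\<in>S. const3 (K i s) * s)))
        + (\<Sum>s\<in>S. const3 (\<Sum>i\<in>I. c i * K i s) * s)"
    by (simp add: right_diff_distrib sum_subtractf)
  also have "\<dots> = (\<Sum>i\<in>I. const3 (c i) * (m i - (\<Sum>s\<in>S. const3 (K i s) * s)))"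
    using c(2) by simp
  also have "\<dots> \<in> component_ideal f"
    by (intro component_ideal_sum component_ideal_mult K)
  finally show ?thesis using c(1) by blast
qed

context weights
begin

lemma pure_power_in_component_ideal:
  assumes f: "hom_form1 d f" and "finite S"
    and span: "\<forall>p. \<exists>k. p - (\<Sum>s\<in>S. const3 (k s) * s) \<in> component_ideal f"
    and "w > 0" and m: "\<And>n. homog (int n * int w) (m n)"
  shows "\<exists>n. m n \<in> component_ideal (f :: 'a::field_char_0 vfield)"
proof -
  obtain c where c: "\<exists>i\<in>{0..card S}. c i \<noteq> 0"
    and P: "(\<Sum>i\<in>{0..card S}. const3 (c i) * m i) \<in> component_ideal f"
    using finite_codim_linear_dependence[OF \<open>finite S\<close> span, of "{0..card S}" m] by auto
  obtain n where n: "n \<in> {0..card S}" "c n \<noteq> 0" using c by blast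
  text \<open>The \<open>m i\<close> have pairwise distinct weights, so a homogeneous part isolates one of them.\<close>
  have "homog_part (int n * int w) (\<Sum>i\<in>{0..card S}. const3 (c i) * m i)
      = (\<Sum>i\<in>{0..card S}. if i = n then const3 (c i) * m i else 0)"
    unfolding homog_part_sum using \<open>w > 0\<close>
    by (intro sum.cong refl) (auto simp: homog_part_const3_mult homog_part_homog[OF m])
  also have "\<dots> = const3 (c n) * m n" using n(1) by simp
  finally have "const3 (c n) * m n \<in> component_ideal f"
    using component_ideal_homog_part[OF f P] by metis
  then have "const3 (inverse (c n)) * (const3 (c n) * m n) \<in> component_ideal f"
    by (rule component_ideal_mult)
  then show ?thesis using n(2) by (auto simp: const3_inverse_mult)
qed



lemma isolated_sing_pure_powers:
  assumes phi: "homog d phi" and "isolated_sing phi"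
  shows "\<exists>a b c. x_pow a \<in> component_ideal (grad phi) \<and> y_pow b \<in> component_ideal (grad phi)
    \<and> z_pow c \<in> component_ideal (grad (phi :: 'a::field_char_0 mpoly3))"
proof -
  obtain S where "finite S"
    and span: "\<forall>p. \<exists>k. p - (\<Sum>s\<in>S. const3 (k s) * s) \<in> component_ideal (grad phi)"
    using assms(2) unfolding isolated_sing_def jac_ideal_eq_component_ideal by blast
  note pure_power = pure_power_in_component_ideal[OF hom_form1_grad[OF phi] \<open>finite S\<close> span]
  show ?thesis
    using pure_power[OF w1_pos homog_x_pow] pure_power[OF w2_pos homog_y_pow]
      pure_power[OF w3_pos homog_z_pow] by blast
qed

end

section \<open>Gradient decomposition\<close>

locale weighted_isolated_singularity = weights +
  fixes phi :: "'a::field_char_0 mpoly3" and d :: int and a b c :: nat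
  assumes homog_phi: "homog d phi"
    and x_pow_in: "x_pow a \<in> component_ideal (grad phi)"
    and y_pow_in: "y_pow b \<in> component_ideal (grad phi)"
    and z_pow_in: "z_pow c \<in> component_ideal (grad phi)"
begin

lemma hom_form1_grad_phi: "hom_form1 d (grad phi)"
  by (rule hom_form1_grad[OF homog_phi])

lemma weight_pos: "d > 0"
proof (rule ccontr)
  assume "\<not> d > 0"
  then have "grad phi = 0"
    using hom_form1_nonpos_eq_0[OF hom_form1_grad_phi] by simp
  then have "(x_pow a :: 'a mpoly3) = 0"
    using x_pow_in by (auto simp: component_ideal_def)
  moreover have "coeff3 (x_pow a :: 'a mpoly3) a 0 0 = 1"
    by (simp add: coeff3_x_pow)
  ultimately show False by simp
qed

lemma curl_orth_decomposition_homog: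
  assumes "hom_form1 D h" and "vdot (curl h) (grad phi) = 0"
  shows "\<exists>F g. homog D F \<and> h = grad F + vscale g (grad phi)"
  using assms
proof (induction "nat D" arbitrary: D h rule: less_induct)
  case less
  let ?f = "grad phi"
  show ?case
  proof (cases "D \<le> 0")
    case True
    then have "h = 0" using hom_form1_nonpos_eq_0 less.prems(1) by blast
    then show ?thesis by (intro exI[of _ 0]) (simp add: grad_def vfield_zero)
  next
    case False
    obtain G where "curl h = vcross G ?f"
      using koszul_syzygy[OF x_pow_in y_pow_in z_pow_in less.prems(2)] by blast
    define H where "H = homog_part_form1 (D - d) G"
    have curl_h: "curl h = vcross H ?f"
      unfolding H_def by (rule curl_eq_vcross_homog_part[OF hom_form1_grad_phi less.prems(1)]) fact
    have "vdot (curl H) ?f = vdiv (curl h)"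
      by (simp add: curl_h vdiv_vcross)
    then have "vdot (curl H) ?f = 0" by simp
    moreover have "nat (D - d) < nat D" using False weight_pos by simp
    ultimately obtain F' g' where F': "homog (D - d) F'" and H: "H = grad F' + vscale g' ?f"
      using less.hyps[OF _ hom_form1_homog_part_form1[of "D - d" G, folded H_def]] by blast
    define k where "k = h - vscale F' ?f"
    have "curl k = 0"
      by (simp add: k_def curl_diff curl_vscale curl_h H vcross_add_left vcross_vscale_left)
    moreover have "hom_form1 D k"
      using hom_form1_vscale[OF F' hom_form1_grad_phi] less.prems(1)
        by (simp add: k_def hom_form1_diff)
    ultimately obtain F where "homog D F" and "k = grad F"
      using closed_hom_form1_eq_grad by blast
    moreover from \<open>k = grad F\<close> have "h = grad F + vscale F' ?f"
      by (simp add: k_def diff_eq_eq)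
    ultimately show ?thesis using F' by blast
  qed
qed

lemma curl_orth_decomposition:
  assumes "vdot (curl h) (grad phi) = 0"
  shows "\<exists>F g. h = grad F + vscale g (grad phi)"
proof -
  obtain S where S: "finite S" "(\<Sum>D\<in>S. homog_part_form1 D h) = h"
    using sum_homog_part_form1 by blast
  have "\<exists>F g. homog_part_form1 D h = grad F + vscale g (grad phi)" for D
  proof -
    have "vdot (curl (homog_part_form1 D h)) (grad phi) = 0"
      using homog_part_vdot_curl[OF hom_form1_grad_phi, of D h] assms by simp
    then show ?thesis
      using curl_orth_decomposition_homog[OF hom_form1_homog_part_form1] by blast
  qed
  then obtain F g where Fg: "\<And>D. homog_part_form1 D h = grad (F D) + vscale (g D) (grad phi)"
    by metis
  have "h = (\<Sum>D\<in>S. homog_part_form1 D h)"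
    using S(2) by simp
  also have "\<dots> = grad (\<Sum>D\<in>S. F D) + vscale (\<Sum>D\<in>S. g D) (grad phi)"
    by (simp add: Fg sum.distrib grad_sum vscale_sum_left)
  finally show ?thesis by blast
qed

end

theorem mainTheorem2:
  fixes w1 w2 w3 :: nat
    and phi :: "'a::field_char_0 mpoly3"
    and h :: "'a vfield"
  assumes "w1 > 0" and "w2 > 0" and "w3 > 0"
    and "gcd w1 (gcd w2 w3) = 1"
    and "whis w1 w2 w3 phi"
    and "vdot (curl h) (grad phi) = 0"
  shows "\<exists>f g. h = vadd (grad f) (vscale g (grad phi))"
proof -
  interpret weights w1 w2 w3
    using assms(1-3) by unfold_locales
  obtain d where "weight_homogeneous w1 w2 w3 d phi" and iso: "isolated_sing phi"
    using assms(5) unfolding whis_def by blast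
  then have phi: "homog (int d) phi"
    by (simp add: weight_homogeneous_def homog_def wt_def)
  obtain a b c where "x_pow a \<in> component_ideal (grad phi)" "y_pow b \<in> component_ideal (grad phi)"
    "z_pow c \<in> component_ideal (grad phi)"
    using isolated_sing_pure_powers[OF phi iso] by blast
  then interpret weighted_isolated_singularity w1 w2 w3 phi "int d" a b c
    using phi by unfold_locales
  show ?thesis
    using curl_orth_decomposition[OF assms(6)] by simp
qed

end
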